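(* Let $n\ge2$ and let $\boldsymbol x^*$ be a pure Nash equilibrium of $\mathcal L(n,S)$. If player $i$ is $\boldsymbol x^*$-balanced, then \[ \rho_i(\boldsymbol x^* )\le\rho_j(\boldsymbol x^* )\quad\text{for all } j\in N. \]
   Context: Network: $(V,E)$ is a finite connected graph with no vertex of degree $2$; each edge $e$ has a length $\lambda(e)>0$. $S$ is the metric measure space obtained by identifying each edge with a segment of length $\lambda(e)$, with length measure $\lambda$ and shortest-path distance $d$. Vertices have their graph degree, and points in the interior of an edge have degree $2$. Location game $\mathcal L(n,S)$ with player set $N=\{1,\dots,n\}$: each player chooses a point of $S$. Consumers are distributed according to $\lambda$, and each shops at a closest occupied location. Consumers equidistant from several closest occupied locations are split equally among those locations, and the share of a location is split equally among the players located there. The payoff $\rho_i(\boldsymbol x)$ is the mass of consumers attracted by player $i$. Nash equilibria are pure. For a profile $\boldsymbol x$ and $w\in S$: if $\operatorname{card}\{i: x_i=w\}=\operatorname{degree}(w)$, then every player located at $w$ is called $\boldsymbol x$-balanced and $w$ is called $\boldsymbol x$-saturated. *)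

theory Defs
  imports "HOL-Analysis.Analysis"
begin

text \<open>The graph has vertex set V and edge set E; each edge e has
  endpoints src e and tgt e (an arbitrary orientation, used only for coordinates)
  and length lam e > 0.  A point of S is either a vertex or an interior point of an
  edge e at coordinate r (distance r from src e), with 0 < r < lam e.\<close>

datatype ('v, 'e) pt = Vtx 'v | EPt 'e real

fun walk :: "'e set \<Rightarrow> ('e \<Rightarrow> 'v) \<Rightarrow> ('e \<Rightarrow> 'v) \<Rightarrow> 'v \<Rightarrow> 'e list \<Rightarrow> 'v \<Rightarrow> bool" where
  "walk E src tgt u [] w \<longleftrightarrow> u = w"
| "walk E src tgt u (e # es) w \<longleftrightarrow> e \<in> E \<and>
     ((src e = u \<and> walk E src tgt (tgt e) es w) \<or> (tgt e = u \<and> walk E src tgt (src e) es w))"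

definition network :: "'v set \<Rightarrow> 'e set \<Rightarrow> ('e \<Rightarrow> 'v) \<Rightarrow> ('e \<Rightarrow> 'v) \<Rightarrow> ('e \<Rightarrow> real) \<Rightarrow> bool" where
  "network V E src tgt lam \<longleftrightarrow> finite V \<and> finite E \<and> V \<noteq> {} \<and>
     (\<forall>e\<in>E. src e \<in> V \<and> tgt e \<in> V \<and> src e \<noteq> tgt e \<and> lam e > 0) \<and>
     (\<forall>e\<in>E. \<forall>e'\<in>E. {src e, tgt e} = {src e', tgt e'} \<longrightarrow> e = e') \<and>
     (\<forall>u\<in>V. \<forall>w\<in>V. \<exists>es. walk E src tgt u es w)"

definition vertex_degree :: "'e set \<Rightarrow> ('e \<Rightarrow> 'v) \<Rightarrow> ('e \<Rightarrow> 'v) \<Rightarrow> 'v \<Rightarrow> nat" where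
  "vertex_degree E src tgt v = card {e \<in> E. src e = v \<or> tgt e = v}"

fun point_degree :: "'e set \<Rightarrow> ('e \<Rightarrow> 'v) \<Rightarrow> ('e \<Rightarrow> 'v) \<Rightarrow> ('v, 'e) pt \<Rightarrow> nat" where
  "point_degree E src tgt (Vtx v) = vertex_degree E src tgt v"
| "point_degree E src tgt (EPt e r) = 2"

fun in_S :: "'v set \<Rightarrow> 'e set \<Rightarrow> ('e \<Rightarrow> real) \<Rightarrow> ('v, 'e) pt \<Rightarrow> bool" where
  "in_S V E lam (Vtx v) \<longleftrightarrow> v \<in> V"
| "in_S V E lam (EPt e r) \<longleftrightarrow> e \<in> E \<and> 0 < r \<and> r < lam e"

definition vdist :: "'e set \<Rightarrow> ('e \<Rightarrow> 'v) \<Rightarrow> ('e \<Rightarrow> 'v) \<Rightarrow> ('e \<Rightarrow> real) \<Rightarrow> 'v \<Rightarrow> 'v \<Rightarrow> real" where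
  "vdist E src tgt lam u w = Inf {sum_list (map lam es) | es. walk E src tgt u es w}"

fun exits :: "('e \<Rightarrow> 'v) \<Rightarrow> ('e \<Rightarrow> 'v) \<Rightarrow> ('e \<Rightarrow> real) \<Rightarrow> ('v, 'e) pt \<Rightarrow> ('v \<times> real) set" where
  "exits src tgt lam (Vtx v) = {(v, 0)}"
| "exits src tgt lam (EPt e r) = {(src e, r), (tgt e, lam e - r)}"

definition pdist :: "'e set \<Rightarrow> ('e \<Rightarrow> 'v) \<Rightarrow> ('e \<Rightarrow> 'v) \<Rightarrow> ('e \<Rightarrow> real) \<Rightarrow> ('v, 'e) pt \<Rightarrow> ('v, 'e) pt \<Rightarrow> real" where
  "pdist E src tgt lam p q =
    (let via = Min {a + vdist E src tgt lam u w + b | u a w b.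
                      (u, a) \<in> exits src tgt lam p \<and> (w, b) \<in> exits src tgt lam q}
     in (case (p, q) of
           (EPt e r, EPt e' r') \<Rightarrow> (if e = e' then min \<bar>r - r'\<bar> via else via)
         | _ \<Rightarrow> via))"

definition edge_pt :: "('e \<Rightarrow> 'v) \<Rightarrow> ('e \<Rightarrow> 'v) \<Rightarrow> ('e \<Rightarrow> real) \<Rightarrow> 'e \<Rightarrow> real \<Rightarrow> ('v, 'e) pt" where
  "edge_pt src tgt lam e r =
     (if r \<le> 0 then Vtx (src e) else if lam e \<le> r then Vtx (tgt e) else EPt e r)"

text \<open>The share of player i of
  the consumer at y: the consumer is split equally among the closest occupied locations,
  and each location's share is split equally among the players located there.\<close>
definition share :: "'e set \<Rightarrow> ('e \<Rightarrow> 'v) \<Rightarrow> ('e \<Rightarrow> 'v) \<Rightarrow> ('e \<Rightarrow> real) \<Rightarrow> nat \<Rightarrow>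
     (nat \<Rightarrow> ('v, 'e) pt) \<Rightarrow> nat \<Rightarrow> ('v, 'e) pt \<Rightarrow> real" where
  "share E src tgt lam n x i y =
    (let d = pdist E src tgt lam;
         D = Min ((\<lambda>k. d y (x k)) ` {1..n});
         C = {x k | k. k \<in> {1..n} \<and> d y (x k) = D}
     in if d y (x i) = D
        then 1 / (real (card C) * real (card {k \<in> {1..n}. x k = x i}))
        else 0)"

definition payoff :: "'e set \<Rightarrow> ('e \<Rightarrow> 'v) \<Rightarrow> ('e \<Rightarrow> 'v) \<Rightarrow> ('e \<Rightarrow> real) \<Rightarrow> nat \<Rightarrow>
     (nat \<Rightarrow> ('v, 'e) pt) \<Rightarrow> nat \<Rightarrow> real" where
  "payoff E src tgt lam n x i =
     (\<Sum>e\<in>E. LINT r:{0..lam e}|lborel. share E src tgt lam n x i (edge_pt src tgt lam e r))"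

definition is_NE :: "'v set \<Rightarrow> 'e set \<Rightarrow> ('e \<Rightarrow> 'v) \<Rightarrow> ('e \<Rightarrow> 'v) \<Rightarrow> ('e \<Rightarrow> real) \<Rightarrow> nat \<Rightarrow>
     (nat \<Rightarrow> ('v, 'e) pt) \<Rightarrow> bool" where
  "is_NE V E src tgt lam n x \<longleftrightarrow>
     (\<forall>i\<in>{1..n}. in_S V E lam (x i)) \<and>
     (\<forall>i\<in>{1..n}. \<forall>y. in_S V E lam y \<longrightarrow>
        payoff E src tgt lam n (x(i := y)) i \<le> payoff E src tgt lam n x i)"

definition balanced :: "'e set \<Rightarrow> ('e \<Rightarrow> 'v) \<Rightarrow> ('e \<Rightarrow> 'v) \<Rightarrow> nat \<Rightarrow> (nat \<Rightarrow> ('v, 'e) pt) \<Rightarrow> nat \<Rightarrow> bool" where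
  "balanced E src tgt n x i \<longleftrightarrow>
     i \<in> {1..n} \<and> card {k \<in> {1..n}. x k = x i} = point_degree E src tgt (x i)"

end

(*
  Let m players, among them the balanced player i, share the location w.  Balancedness says that
  m is the degree of w, i.e. the number of branches of S at w.  For small \<epsilon> > 0 put one point
  on each branch at distance \<epsilon> from w.  A consumer at distance at least \<epsilon> from w is strictly
  closer to one of these points p than to w; so whenever i gets a share of that consumer (at most
  1/m of it), a player j moving to p gets all of it.  The consumers not covered by this argument
  lie within \<epsilon> of a vertex or of w, a set of measure O(\<epsilon>).  Summing over the m possible moves
  of j and using the equilibrium property,
    m \<rho>_i(x) \<le> \<Sum>_p \<rho>_j(x(j := p)) + O(\<epsilon>) \<le> m \<rho>_j(x) + O(\<epsilon>),
  and \<epsilon> \<rightarrow> 0 gives \<rho>_i(x) \<le> \<rho>_j(x).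
*)

theory Submission
  imports Defs
begin

lemma walk_edges_subset: "walk E src tgt u es w \<Longrightarrow> set es \<subseteq> E"
  by (induction es arbitrary: u) auto

lemma walk_snoc_iff:
  "walk E src tgt u (es @ [e]) w \<longleftrightarrow>
     (\<exists>z. walk E src tgt u es z \<and> e \<in> E \<and> ((src e = z \<and> tgt e = w) \<or> (tgt e = z \<and> src e = w)))"
  by (induction es arbitrary: u) auto

lemma finite_exits: "finite (exits src tgt lam p)"
  and exits_nonempty: "exits src tgt lam p \<noteq> {}"
  by (cases p; simp)+

lemma set_integrable_bounded_Icc:
  fixes f :: "real \<Rightarrow> real"
  assumes "f \<in> borel_measurable borel" "\<And>r. \<bar>f r\<bar> \<le> K"
  shows "set_integrable lborel {a..b} f"
proof (rule set_integrable_bound[where f="\<lambda>_. K"])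
  show "set_integrable lborel {a..b} (\<lambda>_. K)"
    unfolding set_integrable_def
    using integrable_real_indicator[of "{a..b}" lborel] by (simp add: emeasure_lborel_Icc_eq)
  show "set_borel_measurable lborel {a..b} f"
    unfolding set_borel_measurable_def using assms(1) by (simp add: measurable_lborel2)
  show "AE r in lborel. r \<in> {a..b} \<longrightarrow> norm (f r) \<le> norm K"
    using assms(2) by (auto intro: order_trans[OF _ abs_ge_self])
qed

lemma set_integral_indicator_Icc_le:
  fixes a b c d :: real
  assumes "c \<le> d"
  shows "(LINT r:{a..b}|lborel. indicator {c..d} r) \<le> d - c"
proof -
  have "(LINT r:{a..b}|lborel. indicator {c..d} r :: real) = measure lborel ({a..b} \<inter> {c..d})"
    unfolding set_lebesgue_integral_def
    by (simp add: indicator_inter_arith[symmetric] mult.commute)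
  also have "\<dots> \<le> measure lborel {c..d}"
    by (intro measure_mono_fmeasurable) (auto simp: fmeasurable_def emeasure_lborel_Icc_eq)
  also have "\<dots> = d - c"
    using assms by simp
  finally show ?thesis .
qed

lemma set_integrable_sum:
  fixes g :: "'b \<Rightarrow> 'a \<Rightarrow> real"
  assumes "\<And>b. b \<in> B \<Longrightarrow> set_integrable M A (g b)"
  shows "set_integrable M A (\<lambda>r. \<Sum>b\<in>B. g b r)"
  using assms unfolding set_integrable_def by (simp add: sum_distrib_left)

lemma set_integral_sum:
  fixes g :: "'b \<Rightarrow> 'a \<Rightarrow> real"
  assumes "\<And>b. b \<in> B \<Longrightarrow> set_integrable M A (g b)"
  shows "(LINT r:A|M. (\<Sum>b\<in>B. g b r)) = (\<Sum>b\<in>B. LINT r:A|M. g b r)"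
  using assms unfolding set_integrable_def set_lebesgue_integral_def
  by (simp add: sum_distrib_left integral_sum)

lemma set_integral_mult_le_sum_add:
  fixes f h :: "real \<Rightarrow> real" and g :: "'b \<Rightarrow> real \<Rightarrow> real"
  assumes "set_integrable lborel A f" "set_integrable lborel A h"
    "\<And>b. b \<in> B \<Longrightarrow> set_integrable lborel A (g b)"
    "\<And>r. r \<in> A \<Longrightarrow> c * f r \<le> (\<Sum>b\<in>B. g b r) + h r"
  shows "c * (LINT r:A|lborel. f r) \<le> (\<Sum>b\<in>B. LINT r:A|lborel. g b r) + (LINT r:A|lborel. h r)"
proof -
  have sum_int: "set_integrable lborel A (\<lambda>r. \<Sum>b\<in>B. g b r)"
    using assms(3) by (rule set_integrable_sum)
  have "c * (LINT r:A|lborel. f r) = (LINT r:A|lborel. c * f r)"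
    by simp
  also have "\<dots> \<le> (LINT r:A|lborel. (\<Sum>b\<in>B. g b r) + h r)"
    using assms sum_int by (intro set_integral_mono) auto
  also have "\<dots> = (\<Sum>b\<in>B. LINT r:A|lborel. g b r) + (LINT r:A|lborel. h r)"
    using sum_int assms(2) set_integral_sum[OF assms(3)] by simp
  finally show ?thesis .
qed

lemma le_if_le_add_linear:
  fixes a b C \<epsilon>\<^sub>0 :: real
  assumes "0 < \<epsilon>\<^sub>0" "\<And>\<epsilon>. 0 < \<epsilon> \<Longrightarrow> \<epsilon> < \<epsilon>\<^sub>0 \<Longrightarrow> a \<le> b + C * \<epsilon>"
  shows "a \<le> b"
proof (rule tendsto_lowerbound)
  show "((\<lambda>\<epsilon>. b + C * \<epsilon>) \<longlongrightarrow> b) (at_right 0)"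
    by (auto intro!: tendsto_eq_intros)
  show "\<forall>\<^sub>F \<epsilon> in at_right 0. a \<le> b + C * \<epsilon>"
    using eventually_at_right_real[OF assms(1)] by eventually_elim (use assms(2) in auto)
qed simp

section \<open>Distances on the network\<close>

locale network_data =
  fixes V :: "'v set" and E :: "'e set" and src tgt :: "'e \<Rightarrow> 'v" and lam :: "'e \<Rightarrow> real"
begin

abbreviation inS :: "('v, 'e) pt \<Rightarrow> bool" where "inS \<equiv> in_S V E lam"
abbreviation dV :: "'v \<Rightarrow> 'v \<Rightarrow> real" where "dV \<equiv> vdist E src tgt lam"
abbreviation dS :: "('v, 'e) pt \<Rightarrow> ('v, 'e) pt \<Rightarrow> real" where "dS \<equiv> pdist E src tgt lam"

definition via_dist :: "('v, 'e) pt \<Rightarrow> ('v, 'e) pt \<Rightarrow> real" where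
  "via_dist p q = Min ((\<lambda>((u, a), (w, b)). a + dV u w + b) ` (exits src tgt lam p \<times> exits src tgt lam q))"

lemma pdist_eq_via_dist:
  "dS p q = (case (p, q) of
       (EPt e r, EPt e' r') \<Rightarrow> if e = e' then min \<bar>r - r'\<bar> (via_dist p q) else via_dist p q
     | _ \<Rightarrow> via_dist p q)"
proof -
  have "{a + dV u w + b | u a w b. (u, a) \<in> exits src tgt lam p \<and> (w, b) \<in> exits src tgt lam q}
      = (\<lambda>((u, a), (w, b)). a + dV u w + b) ` (exits src tgt lam p \<times> exits src tgt lam q)"
    by force
  then show ?thesis
    unfolding pdist_def Let_def via_dist_def by (simp only:)
qed

lemma via_dist_le:
  "(u, a) \<in> exits src tgt lam p \<Longrightarrow> (w, b) \<in> exits src tgt lam q \<Longrightarrow> via_dist p q \<le> a + dV u w + b"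
  unfolding via_dist_def
  by (rule Min_le) (auto simp: finite_exits intro!: image_eqI[where x="((u, a), (w, b))"])

lemma via_dist_attained:
  obtains u a w b where "(u, a) \<in> exits src tgt lam p" "(w, b) \<in> exits src tgt lam q"
    "via_dist p q = a + dV u w + b"
proof -
  have "via_dist p q \<in> (\<lambda>((u, a), (w, b)). a + dV u w + b) ` (exits src tgt lam p \<times> exits src tgt lam q)"
    unfolding via_dist_def by (rule Min_in) (auto simp: finite_exits exits_nonempty)
  then show ?thesis using that by auto
qed

lemma pdist_le_via_dist: "dS p q \<le> via_dist p q"
  unfolding pdist_eq_via_dist by (cases p; cases q; auto)

lemma pdist_same_edge_le: "dS (EPt e r) (EPt e r') \<le> \<bar>r - r'\<bar>"
  unfolding pdist_eq_via_dist by auto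

lemma pdist_cases:
  "dS p q = via_dist p q \<or> (\<exists>e r r'. p = EPt e r \<and> q = EPt e r' \<and> dS p q = \<bar>r - r'\<bar>)"
  unfolding pdist_eq_via_dist by (cases p; cases q; auto simp: min_def)

lemma via_dist_EPt:
  "via_dist (EPt e r) q =
     min (r + via_dist (Vtx (src e)) q) (lam e - r + via_dist (Vtx (tgt e)) q)"
proof -
  let ?X = "exits src tgt lam q" and ?g = "\<lambda>((u, a), (w, b)). a + dV u w + b"
  define h where "h u = (\<lambda>(w, b). dV u w + b)" for u
  have single: "?g ` ({(u, a)} \<times> ?X) = (\<lambda>z. h u z + a) ` ?X" for u a
    unfolding h_def by force
  have fin: "finite ?X" "?X \<noteq> {}"
    by (simp_all add: finite_exits exits_nonempty)
  have vtx: "via_dist (Vtx u) q = Min (h u ` ?X)" for u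
    using single[of u 0] by (simp add: via_dist_def)
  have "exits src tgt lam (EPt e r) \<times> ?X = {(src e, r)} \<times> ?X \<union> {(tgt e, lam e - r)} \<times> ?X"
    by auto
  then have "via_dist (EPt e r) q = Min ((\<lambda>z. h (src e) z + r) ` ?X \<union> (\<lambda>z. h (tgt e) z + (lam e - r)) ` ?X)"
    unfolding via_dist_def by (simp only: image_Un single)
  also have "\<dots> = min (Min (h (src e) ` ?X) + r) (Min (h (tgt e) ` ?X) + (lam e - r))"
    using fin by (simp add: Min_Un Min_add_commute)
  finally show ?thesis
    by (simp add: vtx add.commute)
qed

lemma pdist_edge_pt_measurable [measurable]:
  "(\<lambda>r. dS (edge_pt src tgt lam e r) q) \<in> borel_measurable borel"
proof -
  have "(\<lambda>r. dS (EPt e r) q) \<in> borel_measurable borel"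
    unfolding pdist_eq_via_dist via_dist_EPt by (cases q) auto
  moreover have "(\<lambda>r. dS (edge_pt src tgt lam e r) q) =
      (\<lambda>r. if r \<le> 0 then dS (Vtx (src e)) q else if lam e \<le> r then dS (Vtx (tgt e)) q
            else dS (EPt e r) q)"
    by (auto simp: edge_pt_def)
  ultimately show ?thesis
    by simp
qed

definition other_end :: "'e \<Rightarrow> 'v \<Rightarrow> 'v" where
  "other_end e v = (if src e = v then tgt e else src e)"

definition point_along :: "'e \<Rightarrow> 'v \<Rightarrow> real \<Rightarrow> ('v, 'e) pt" where
  "point_along e v t = (if src e = v then EPt e t else EPt e (lam e - t))"

lemma exits_point_along: "(other_end e v, lam e - t) \<in> exits src tgt lam (point_along e v t)"
  by (simp add: point_along_def other_end_def)

definition star_radius :: "real \<Rightarrow> ('v, 'e) pt \<Rightarrow> bool" where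
  "star_radius \<epsilon> w \<longleftrightarrow>
     0 < \<epsilon> \<and> (\<forall>e\<in>E. \<epsilon> < lam e) \<and> (\<forall>e r. w = EPt e r \<longrightarrow> \<epsilon> < r \<and> \<epsilon> < lam e - r)"

lemma star_radius_mono: "star_radius \<epsilon>' w \<Longrightarrow> 0 < \<epsilon> \<Longrightarrow> \<epsilon> \<le> \<epsilon>' \<Longrightarrow> star_radius \<epsilon> w"
  unfolding star_radius_def by force

section \<open>Shares of consumers\<close>

lemma share_nonneg: "0 \<le> share E src tgt lam n x i y"
  unfolding share_def Let_def by simp

lemma share_le_inverse_multiplicity:
  assumes "i \<in> {1..n}"
  shows "share E src tgt lam n x i y \<le> 1 / real (card {k \<in> {1..n}. x k = x i})"
proof -
  define D where "D = Min ((\<lambda>k. dS y (x k)) ` {1..n})"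
  define C where "C = {x k | k. k \<in> {1..n} \<and> dS y (x k) = D}"
  have "0 < card {k \<in> {1..n}. x k = x i}"
    using assms by (auto simp: card_gt_0_iff)
  moreover have "1 \<le> card C" if "dS y (x i) = D"
  proof -
    have "x i \<in> C" "finite C"
      using that assms by (auto simp: C_def)
    then show ?thesis
      by (simp add: Suc_le_eq card_gt_0_iff) blast
  qed
  ultimately show ?thesis
    unfolding share_def Let_def D_def[symmetric] C_def[symmetric]
    by (auto intro!: divide_left_mono mult_pos_pos)
qed

lemma share_le_1:
  assumes "i \<in> {1..n}"
  shows "share E src tgt lam n x i y \<le> 1"
proof -
  have "1 \<le> card {k \<in> {1..n}. x k = x i}"
    using assms by (auto simp: Suc_le_eq card_gt_0_iff)
  then have "1 / real (card {k \<in> {1..n}. x k = x i}) \<le> 1"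
    by simp
  then show ?thesis
    using share_le_inverse_multiplicity[OF assms, of x y] by linarith
qed

lemma share_pos_imp_closest:
  assumes "0 < share E src tgt lam n x i y" "k \<in> {1..n}"
  shows "dS y (x i) \<le> dS y (x k)"
proof -
  have "dS y (x i) = Min ((\<lambda>k. dS y (x k)) ` {1..n})"
    using assms(1) unfolding share_def Let_def by (auto split: if_splits)
  also have "\<dots> \<le> dS y (x k)"
    using assms(2) by simp
  finally show ?thesis .
qed

lemma share_eq_1_if_strictly_closest:
  assumes "j \<in> {1..n}" "\<forall>k\<in>{1..n}. k \<noteq> j \<longrightarrow> dS y (x j) < dS y (x k)"
  shows "share E src tgt lam n x j y = 1"
proof -
  define D where "D = Min ((\<lambda>k. dS y (x k)) ` {1..n})"
  have D: "D = dS y (x j)"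
    unfolding D_def using assms by (intro Min_eqI) (auto simp: less_imp_le)
  have "k = j" if "k \<in> {1..n}" "dS y (x k) = D \<or> x k = x j" for k
    using that assms D by (metis less_irrefl)
  then have "{x k | k. k \<in> {1..n} \<and> dS y (x k) = D} = {x j}" "{k \<in> {1..n}. x k = x j} = {j}"
    using assms(1) D by auto
  then show ?thesis
    unfolding share_def Let_def D_def[symmetric] using D by simp
qed

lemma deviation_captures_share:
  assumes "i \<in> {1..n}" "j \<in> {1..n}" "0 < share E src tgt lam n x i y" "dS y p < dS y (x i)"
  shows "share E src tgt lam n (x(j := p)) j y = 1"
proof (rule share_eq_1_if_strictly_closest)
  show "\<forall>k\<in>{1..n}. k \<noteq> j \<longrightarrow> dS y ((x(j := p)) j) < dS y ((x(j := p)) k)"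
    using share_pos_imp_closest[OF assms(3)] assms(4) by fastforce
qed (rule assms(2))

lemma multiplicity_mult_share_le_1:
  assumes "i \<in> {1..n}"
  shows "real (card {k \<in> {1..n}. x k = x i}) * share E src tgt lam n x i y \<le> 1"
proof -
  have "0 < real (card {k \<in> {1..n}. x k = x i})"
    using assms by (auto simp: card_gt_0_iff)
  then show ?thesis
    using share_le_inverse_multiplicity[OF assms, of x y] by (simp add: le_divide_eq mult.commute)
qed

lemma multiplicity_share_le_deviation_shares:
  assumes "i \<in> {1..n}" "j \<in> {1..n}" "finite P" "\<exists>p\<in>P. dS y p < dS y (x i)"
  shows "real (card {k \<in> {1..n}. x k = x i}) * share E src tgt lam n x i y
    \<le> (\<Sum>p\<in>P. share E src tgt lam n (x(j := p)) j y)"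
proof (cases "share E src tgt lam n x i y = 0")
  case True
  then show ?thesis
    by (simp add: sum_nonneg share_nonneg)
next
  case False
  then have "0 < share E src tgt lam n x i y"
    using share_nonneg by (simp add: order_less_le)
  obtain p where "p \<in> P" "dS y p < dS y (x i)"
    using assms(4) by blast
  have "real (card {k \<in> {1..n}. x k = x i}) * share E src tgt lam n x i y \<le> 1"
    using multiplicity_mult_share_le_1[OF assms(1)] .
  also have "\<dots> = share E src tgt lam n (x(j := p)) j y"
    using deviation_captures_share[OF assms(1,2) \<open>0 < share E src tgt lam n x i y\<close>] \<open>dS y p < dS y (x i)\<close>
    by simp
  also have "\<dots> \<le> (\<Sum>p\<in>P. share E src tgt lam n (x(j := p)) j y)"
    using \<open>p \<in> P\<close> assms(3) by (intro member_le_sum) (simp_all add: share_nonneg)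
  finally show ?thesis .
qed

lemma share_edge_pt_measurable [measurable]:
  "(\<lambda>r. share E src tgt lam n x k (edge_pt src tgt lam e r)) \<in> borel_measurable borel"
proof -
  have count: "card {x k | k. k \<in> {1..n} \<and> dS y (x k) = D} = (\<Sum>q\<in>x ` {1..n}. if dS y q = D then 1 else 0)"
    for y D
  proof -
    have "{x k | k. k \<in> {1..n} \<and> dS y (x k) = D} = {q \<in> x ` {1..n}. dS y q = D}"
      by auto
    then show ?thesis
      by (simp add: sum.inter_filter[symmetric])
  qed
  show ?thesis
    unfolding share_def Let_def count by measurable
qed

end

locale metric_network = network_data +
  assumes network: "network V E src tgt lam"
begin

lemma finite_E: "finite E"
  using network unfolding network_def by auto

lemma lam_pos: "e \<in> E \<Longrightarrow> 0 < lam e"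
  and src_tgt_in_V: "e \<in> E \<Longrightarrow> src e \<in> V \<and> tgt e \<in> V"
  and src_ne_tgt: "e \<in> E \<Longrightarrow> src e \<noteq> tgt e"
  using network unfolding network_def by auto

lemma walk_exists: "u \<in> V \<Longrightarrow> w \<in> V \<Longrightarrow> \<exists>es. walk E src tgt u es w"
  using network unfolding network_def by auto

lemma walk_length_nonneg: "walk E src tgt u es w \<Longrightarrow> 0 \<le> sum_list (map lam es)"
  by (auto intro!: sum_list_nonneg less_imp_le[OF lam_pos] dest!: walk_edges_subset)

lemma vdist_nonneg: "u \<in> V \<Longrightarrow> w \<in> V \<Longrightarrow> 0 \<le> dV u w"
  unfolding vdist_def by (rule cInf_greatest) (use walk_exists walk_length_nonneg in auto)

lemma vdist_le_walk: "walk E src tgt u es w \<Longrightarrow> dV u w \<le> sum_list (map lam es)"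
  unfolding vdist_def
  by (rule cInf_lower) (auto simp: bdd_below_def intro!: exI[of _ 0] walk_length_nonneg)

lemma vdist_self: "v \<in> V \<Longrightarrow> dV v v = 0"
  using vdist_nonneg[of v v] vdist_le_walk[of v "[]" v] by simp

lemma walk_last_edge:
  assumes "walk E src tgt u es v" "u \<noteq> v"
  obtains e where "e \<in> E" "src e = v \<or> tgt e = v" "dV u (other_end e v) + lam e \<le> sum_list (map lam es)"
proof -
  obtain es' e where es: "es = es' @ [e]"
    using assms by (cases es rule: rev_cases) auto
  with assms(1) obtain z where z: "walk E src tgt u es' z" "e \<in> E"
    "(src e = z \<and> tgt e = v) \<or> (tgt e = z \<and> src e = v)"
    by (auto simp: walk_snoc_iff)
  then have "z = other_end e v"
    using src_ne_tgt by (auto simp: other_end_def)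
  then have "dV u (other_end e v) + lam e \<le> sum_list (map lam es)"
    using vdist_le_walk[OF z(1)] es by simp
  then show ?thesis
    using that z by blast
qed

lemma vdist_last_edge:
  assumes "u \<in> V" "v \<in> V" "u \<noteq> v"
  obtains e where "e \<in> E" "src e = v \<or> tgt e = v" "dV u (other_end e v) + lam e \<le> dV u v"
proof -
  define I where "I = {e \<in> E. src e = v \<or> tgt e = v}"
  define g where "g e = dV u (other_end e v) + lam e" for e
  obtain es0 where "walk E src tgt u es0 v"
    using walk_exists assms by blast
  then have "I \<noteq> {}"
    using walk_last_edge assms(3) unfolding I_def by blast
  moreover have "finite I"
    using finite_E by (simp add: I_def)
  ultimately have "Min (g ` I) \<in> g ` I"
    by (intro Min_in) auto
  then obtain e0 where e0: "e0 \<in> I" "g e0 = Min (g ` I)"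
    by auto
  have "Min (g ` I) \<le> dV u v"
    unfolding vdist_def
  proof (rule cInf_greatest)
    show "{sum_list (map lam es) |es. walk E src tgt u es v} \<noteq> {}"
      using \<open>walk E src tgt u es0 v\<close> by auto
  next
    fix l assume "l \<in> {sum_list (map lam es) |es. walk E src tgt u es v}"
    then obtain e where "e \<in> I" "g e \<le> l"
      using walk_last_edge assms(3) unfolding I_def g_def by blast
    moreover have "Min (g ` I) \<le> g e"
      using \<open>finite I\<close> \<open>e \<in> I\<close> by simp
    ultimately show "Min (g ` I) \<le> l"
      by linarith
  qed
  then show ?thesis
    using that e0 by (auto simp: I_def g_def)
qed

lemma exits_in_V:
  "inS p \<Longrightarrow> (u, a) \<in> exits src tgt lam p \<Longrightarrow> u \<in> V \<and> 0 \<le> a"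
  by (cases p) (auto dest: src_tgt_in_V)

lemma via_dist_gt:
  assumes "inS p" "inS q" "\<And>u a. (u, a) \<in> exits src tgt lam p \<Longrightarrow> t < a"
  shows "t < via_dist p q"
proof -
  obtain u a w b where uw: "(u, a) \<in> exits src tgt lam p" "(w, b) \<in> exits src tgt lam q"
    "via_dist p q = a + dV u w + b"
    by (rule via_dist_attained)
  then have "0 \<le> dV u w" "0 \<le> b"
    using exits_in_V assms(1,2) vdist_nonneg by blast+
  then show ?thesis
    using uw assms(3)[OF uw(1)] by linarith
qed

lemma pdist_EPt_gt:
  assumes "e \<in> E" "inS q" "0 \<le> t" "t < r" "r < lam e - t"
    and "\<And>r'. q = EPt e r' \<Longrightarrow> t < \<bar>r - r'\<bar>"
  shows "t < dS (EPt e r) q"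
proof -
  have "t < via_dist (EPt e r) q"
    by (rule via_dist_gt) (use assms in auto)
  then show ?thesis
    using pdist_cases[of "EPt e r" q] assms(6) by auto
qed

section \<open>Escaping a location\<close>

lemma pdist_point_along_le:
  assumes "e \<in> E" "(v, a) \<in> exits src tgt lam (EPt e r)" "\<epsilon> \<le> a"
  shows "dS (EPt e r) (point_along e v \<epsilon>) \<le> a - \<epsilon>"
proof -
  have "(v, a) = (src e, r) \<or> (v, a) = (tgt e, lam e - r) \<and> src e \<noteq> v"
    using assms(1,2) src_ne_tgt by auto
  then show ?thesis
    using assms(3) pdist_same_edge_le[of e r \<epsilon>] pdist_same_edge_le[of e r "lam e - \<epsilon>"]
    by (auto simp: point_along_def)
qed

lemma closer_point_along_at_vertex:
  assumes "v \<in> V" "inS y" "0 < \<epsilon>" "\<epsilon> \<le> dS y (Vtx v)"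
  obtains e where "e \<in> E" "src e = v \<or> tgt e = v" "dS y (point_along e v \<epsilon>) < dS y (Vtx v)"
proof -
  obtain u a w b where uw: "(u, a) \<in> exits src tgt lam y" "(w, b) \<in> exits src tgt lam (Vtx v)"
    "via_dist y (Vtx v) = a + dV u w + b"
    by (rule via_dist_attained)
  have dist: "dS y (Vtx v) = a + dV u v"
    using uw pdist_cases[of y "Vtx v"] by auto
  have "u \<in> V"
    using exits_in_V assms(2) uw(1) by blast
  show ?thesis
  proof (cases "u = v")
    case True
    then have "dS y (Vtx v) = a"
      using dist vdist_self assms(1) by simp
    then obtain e r where "y = EPt e r" "e \<in> E"
      using uw(1) True assms by (cases y) auto
    with uw(1) True have "src e = v \<or> tgt e = v" "dS y (point_along e v \<epsilon>) \<le> a - \<epsilon>"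
      using pdist_point_along_le[of e v a r \<epsilon>] \<open>dS y (Vtx v) = a\<close> assms(4) by auto
    then show ?thesis
      using that \<open>e \<in> E\<close> \<open>dS y (Vtx v) = a\<close> assms(3) by fastforce
  next
    case False
    obtain e where e: "e \<in> E" "src e = v \<or> tgt e = v" "dV u (other_end e v) + lam e \<le> dV u v"
      using vdist_last_edge[OF \<open>u \<in> V\<close> assms(1) False] .
    have "dS y (point_along e v \<epsilon>) \<le> a + dV u (other_end e v) + (lam e - \<epsilon>)"
      using pdist_le_via_dist via_dist_le[OF uw(1) exits_point_along] by (rule order_trans)
    also have "\<dots> < dS y (Vtx v)"
      using e(3) dist assms(3) by simp
    finally show ?thesis
      using that e(1,2) by blast
  qed
qed

lemma closer_point_at_interior:
  assumes "e \<in> E" "0 < \<epsilon>" "\<epsilon> \<le> dS y (EPt e r)"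
  shows "dS y (EPt e (r - \<epsilon>)) < dS y (EPt e r) \<or> dS y (EPt e (r + \<epsilon>)) < dS y (EPt e r)"
proof (cases "dS y (EPt e r) = via_dist y (EPt e r)")
  case True
  obtain u a w b where uw: "(u, a) \<in> exits src tgt lam y" "(w, b) \<in> exits src tgt lam (EPt e r)"
    "via_dist y (EPt e r) = a + dV u w + b"
    by (rule via_dist_attained)
  then consider "w = src e" "b = r" | "w = tgt e" "b = lam e - r"
    by auto
  then show ?thesis
  proof cases
    case 1
    have "dS y (EPt e (r - \<epsilon>)) \<le> a + dV u (src e) + (r - \<epsilon>)"
      using pdist_le_via_dist via_dist_le[OF uw(1), of "src e" "r - \<epsilon>"] by (rule order_trans) simp
    then show ?thesis
      using True uw(3) 1 assms(2) by auto
  next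
    case 2
    have "dS y (EPt e (r + \<epsilon>)) \<le> a + dV u (tgt e) + (lam e - r - \<epsilon>)"
      using pdist_le_via_dist via_dist_le[OF uw(1), of "tgt e" "lam e - r - \<epsilon>"] by (rule order_trans) simp
    then show ?thesis
      using True uw(3) 2 assms(2) by auto
  qed
next
  case False
  then obtain r' where "y = EPt e r'" "dS y (EPt e r) = \<bar>r' - r\<bar>"
    using pdist_cases[of y "EPt e r"] by auto
  then show ?thesis
    using pdist_same_edge_le[of e r' "r - \<epsilon>"] pdist_same_edge_le[of e r' "r + \<epsilon>"] assms(2,3)
    by (cases "r' < r") auto
qed

lemma star_radius_exists:
  assumes "inS w"
  obtains \<epsilon> where "star_radius \<epsilon> w"
proof -
  define Q where "Q = insert 1 (lam ` E \<union> (case w of EPt e r \<Rightarrow> {r, lam e - r} | _ \<Rightarrow> {}))"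
  have "finite Q"
    using finite_E by (cases w) (auto simp: Q_def)
  have "0 < q" if "q \<in> Q" for q
    using assms lam_pos that by (cases w) (auto simp: Q_def)
  then have "0 < Min Q"
    using \<open>finite Q\<close> by (subst Min_gr_iff) (auto simp: Q_def)
  have below: "Min Q / 2 < q" if "q \<in> Q" for q
    using Min_le[OF \<open>finite Q\<close> that] \<open>0 < Min Q\<close> by linarith
  have "lam e \<in> Q" if "e \<in> E" for e
    using that by (simp add: Q_def)
  moreover have "r \<in> Q \<and> lam e - r \<in> Q" if "w = EPt e r" for e r
    using that by (simp add: Q_def)
  ultimately have "star_radius (Min Q / 2) w"
    unfolding star_radius_def using below half_gt_zero[OF \<open>0 < Min Q\<close>] by blast
  then show ?thesis
    by (rule that)
qed

lemma branch_points_exist: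
  assumes "inS w" "star_radius \<epsilon> w"
  obtains P where "finite P" "card P = point_degree E src tgt w" "\<forall>p\<in>P. inS p"
    "\<And>y. inS y \<Longrightarrow> \<epsilon> \<le> dS y w \<Longrightarrow> \<exists>p\<in>P. dS y p < dS y w"
proof (cases w)
  case (Vtx v)
  define I where "I = {e \<in> E. src e = v \<or> tgt e = v}"
  let ?P = "(\<lambda>e. point_along e v \<epsilon>) ` I"
  have "finite ?P"
    using finite_E by (simp add: I_def)
  moreover have "inj_on (\<lambda>e. point_along e v \<epsilon>) I"
    by (rule inj_onI) (simp add: point_along_def split: if_splits)
  then have "card ?P = point_degree E src tgt w"
    by (simp add: card_image Vtx I_def vertex_degree_def)
  moreover have "\<forall>p\<in>?P. inS p"
    using assms(2) by (auto simp: I_def point_along_def star_radius_def)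
  moreover have "\<exists>p\<in>?P. dS y p < dS y w" if y: "inS y" "\<epsilon> \<le> dS y w" for y
  proof -
    have "v \<in> V" "0 < \<epsilon>"
      using assms Vtx by (simp_all add: star_radius_def)
    then obtain e where "e \<in> I" "dS y (point_along e v \<epsilon>) < dS y w"
      using closer_point_along_at_vertex[of v y \<epsilon>] y Vtx unfolding I_def by blast
    then show ?thesis
      by blast
  qed
  ultimately show ?thesis
    by (rule that)
next
  case (EPt e r)
  let ?P = "{EPt e (r - \<epsilon>), EPt e (r + \<epsilon>)}"
  have "e \<in> E" "0 < \<epsilon>" "\<epsilon> < r" "\<epsilon> < lam e - r"
    using assms EPt by (simp_all add: star_radius_def)
  then have "finite ?P" "card ?P = point_degree E src tgt w" "\<forall>p\<in>?P. inS p"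
    using EPt by auto
  moreover have "\<exists>p\<in>?P. dS y p < dS y w" if "\<epsilon> \<le> dS y w" for y
    using closer_point_at_interior[of e \<epsilon> y r] that \<open>e \<in> E\<close> \<open>0 < \<epsilon>\<close> EPt by auto
  ultimately show ?thesis
    by (rule that)
qed

section \<open>Relocating beside a balanced player\<close>

lemma edge_pt_in_S: "e \<in> E \<Longrightarrow> r \<in> {0..lam e} \<Longrightarrow> inS (edge_pt src tgt lam e r)"
  using lam_pos src_tgt_in_V by (auto simp: edge_pt_def)

lemma multiplicity_share_le_deviation_shares_on_edge:
  assumes "i \<in> {1..n}" "j \<in> {1..n}" "inS (x i)" "e \<in> E" "r \<in> {0..lam e}" "0 < \<epsilon>" "finite P"
    and closer: "\<And>y. inS y \<Longrightarrow> \<epsilon> \<le> dS y (x i) \<Longrightarrow> \<exists>p\<in>P. dS y p < dS y (x i)"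
    and "\<And>r'. x i = EPt e r' \<Longrightarrow> c = r'"
  shows "real (card {k \<in> {1..n}. x k = x i}) * share E src tgt lam n x i (edge_pt src tgt lam e r)
    \<le> (\<Sum>p\<in>P. share E src tgt lam n (x(j := p)) j (edge_pt src tgt lam e r))
      + (indicator {0..\<epsilon>} r + indicator {lam e - \<epsilon>..lam e} r + indicator {c - \<epsilon>..c + \<epsilon>} r)"
    (is "?m * ?s \<le> ?dev + ?h")
proof (cases "r \<in> {0..\<epsilon>} \<union> {lam e - \<epsilon>..lam e} \<union> {c - \<epsilon>..c + \<epsilon>}")
  case True
  have "?m * ?s \<le> 1"
    using multiplicity_mult_share_le_1[OF assms(1)] .
  also have "\<dots> \<le> ?h"
    using True by (auto split: split_indicator)
  finally show ?thesis
    by (simp add: add_increasing sum_nonneg share_nonneg)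
next
  case False
  then have "\<epsilon> < dS (EPt e r) (x i)"
    using assms(5,6,9) by (intro pdist_EPt_gt assms(3,4)) auto
  moreover have "edge_pt src tgt lam e r = EPt e r"
    using False assms(5,6) by (auto simp: edge_pt_def)
  ultimately have "?m * ?s \<le> ?dev"
    using closer edge_pt_in_S[OF assms(4,5)] assms(1,2,7)
    by (intro multiplicity_share_le_deviation_shares) auto
  then show ?thesis
    by (simp add: add_increasing2)
qed

lemma edge_integral_le_deviations:
  assumes "i \<in> {1..n}" "j \<in> {1..n}" "inS (x i)" "e \<in> E" "0 < \<epsilon>" "finite P"
    and closer: "\<And>y. inS y \<Longrightarrow> \<epsilon> \<le> dS y (x i) \<Longrightarrow> \<exists>p\<in>P. dS y p < dS y (x i)"
  shows "real (card {k \<in> {1..n}. x k = x i})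
      * (LINT r:{0..lam e}|lborel. share E src tgt lam n x i (edge_pt src tgt lam e r))
    \<le> (\<Sum>p\<in>P. LINT r:{0..lam e}|lborel. share E src tgt lam n (x(j := p)) j (edge_pt src tgt lam e r))
      + 4 * \<epsilon>"
proof -
  let ?s = "\<lambda>z k r. share E src tgt lam n z k (edge_pt src tgt lam e r)"
  let ?I = "\<lambda>a b. indicator {a..b} :: real \<Rightarrow> real"
  \<comment> \<open>The coordinate of \<open>x i\<close> on \<open>e\<close>; the junk value \<open>0\<close> only duplicates the
    interval at the \<open>src e\<close> end.\<close>
  define c where "c = (case x i of EPt e' r' \<Rightarrow> if e' = e then r' else 0 | _ \<Rightarrow> 0)"
  define h where "h r = ?I 0 \<epsilon> r + ?I (lam e - \<epsilon>) (lam e) r + ?I (c - \<epsilon>) (c + \<epsilon>) r" for r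
  have share_int: "set_integrable lborel {0..lam e} (?s z k)" if "k \<in> {1..n}" for z k
    using share_nonneg share_le_1[OF that] by (intro set_integrable_bounded_Icc[where K=1]) auto
  have ind_int: "set_integrable lborel {0..lam e} (?I a b)" for a b
    by (rule set_integrable_bounded_Icc[where K=1]) (auto split: split_indicator)
  have "(LINT r:{0..lam e}|lborel. h r) \<le> 4 * \<epsilon>"
    unfolding h_def using ind_int assms(5) set_integral_indicator_Icc_le[of 0 \<epsilon> 0 "lam e"]
      set_integral_indicator_Icc_le[of "lam e - \<epsilon>" "lam e" 0 "lam e"]
      set_integral_indicator_Icc_le[of "c - \<epsilon>" "c + \<epsilon>" 0 "lam e"]
    by (simp add: set_integral_add)
  moreover have "real (card {k \<in> {1..n}. x k = x i}) * (LINT r:{0..lam e}|lborel. ?s x i r)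
      \<le> (\<Sum>p\<in>P. LINT r:{0..lam e}|lborel. ?s (x(j := p)) j r) + (LINT r:{0..lam e}|lborel. h r)"
  proof (rule set_integral_mult_le_sum_add)
    show "set_integrable lborel {0..lam e} h"
      unfolding h_def using ind_int by simp
    show "real (card {k \<in> {1..n}. x k = x i}) * ?s x i r \<le> (\<Sum>p\<in>P. ?s (x(j := p)) j r) + h r"
      if "r \<in> {0..lam e}" for r
      unfolding h_def using assms that
      by (intro multiplicity_share_le_deviation_shares_on_edge) (auto simp: c_def)
  qed (use share_int assms(1,2) in auto)
  ultimately show ?thesis
    by linarith
qed

lemma balanced_payoff_le_payoff_add:
  assumes "is_NE V E src tgt lam n x" "balanced E src tgt n x i" "j \<in> {1..n}" "star_radius \<epsilon> (x i)"
  shows "real (point_degree E src tgt (x i)) * payoff E src tgt lam n x i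
    \<le> real (point_degree E src tgt (x i)) * payoff E src tgt lam n x j + 4 * real (card E) * \<epsilon>"
proof -
  let ?m = "real (point_degree E src tgt (x i))"
  let ?int = "\<lambda>z k e. LINT r:{0..lam e}|lborel. share E src tgt lam n z k (edge_pt src tgt lam e r)"
  have i: "i \<in> {1..n}" "card {k \<in> {1..n}. x k = x i} = point_degree E src tgt (x i)"
    using assms(2) by (simp_all add: balanced_def)
  have "inS (x i)"
    and deviation: "\<And>p. inS p \<Longrightarrow> payoff E src tgt lam n (x(j := p)) j \<le> payoff E src tgt lam n x j"
    using assms(1,3) i(1) by (auto simp: is_NE_def)
  obtain P where P: "finite P" "card P = point_degree E src tgt (x i)" "\<forall>p\<in>P. inS p"
    and closer: "\<And>y. inS y \<Longrightarrow> \<epsilon> \<le> dS y (x i) \<Longrightarrow> \<exists>p\<in>P. dS y p < dS y (x i)"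
    using branch_points_exist[OF \<open>inS (x i)\<close> assms(4)] by blast
  have "?m * payoff E src tgt lam n x i = (\<Sum>e\<in>E. ?m * ?int x i e)"
    unfolding payoff_def by (simp add: sum_distrib_left)
  also have "\<dots> \<le> (\<Sum>e\<in>E. (\<Sum>p\<in>P. ?int (x(j := p)) j e) + 4 * \<epsilon>)"
    using edge_integral_le_deviations[where x=x and i=i and j=j and P=P, OF i(1) assms(3) \<open>inS (x i)\<close>
        _ _ P(1) closer] assms(4) i(2)
    by (intro sum_mono) (simp add: star_radius_def)
  also have "\<dots> = (\<Sum>p\<in>P. payoff E src tgt lam n (x(j := p)) j) + 4 * real (card E) * \<epsilon>"
    unfolding payoff_def by (simp add: sum.distrib sum.swap[of _ E P])
  also have "(\<Sum>p\<in>P. payoff E src tgt lam n (x(j := p)) j) \<le> ?m * payoff E src tgt lam n x j"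
    using sum_mono[of P _ "\<lambda>_. payoff E src tgt lam n x j"] deviation P(2,3) by simp
  finally show ?thesis
    by simp
qed

end

lemma balanced_point_degree_pos:
  assumes "balanced E src tgt n x i"
  shows "0 < point_degree E src tgt (x i)"
proof -
  have "i \<in> {1..n}" "card {k \<in> {1..n}. x k = x i} = point_degree E src tgt (x i)"
    using assms by (simp_all add: balanced_def)
  moreover from this(1) have "0 < card {k \<in> {1..n}. x k = x i}"
    by (auto simp: card_gt_0_iff)
  ultimately show ?thesis
    by simp
qed

theorem mainTheorem7:
  fixes V :: "'v set" and E :: "'e set" and src tgt :: "'e \<Rightarrow> 'v" and lam :: "'e \<Rightarrow> real"
    and n :: nat and x :: "nat \<Rightarrow> ('v, 'e) pt" and i :: nat
  assumes "network V E src tgt lam"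
    and "\<forall>v\<in>V. vertex_degree E src tgt v \<noteq> 2"
    and "n \<ge> 2"
    and "is_NE V E src tgt lam n x"
    and "balanced E src tgt n x i"
  shows "\<forall>j\<in>{1..n}. payoff E src tgt lam n x i \<le> payoff E src tgt lam n x j"
proof
  fix j assume j: "j \<in> {1..n}"
  interpret metric_network V E src tgt lam
    by unfold_locales (rule assms(1))
  let ?m = "real (point_degree E src tgt (x i))"
  have "inS (x i)"
    using assms(4,5) by (simp add: is_NE_def balanced_def)
  then obtain \<epsilon>\<^sub>0 where \<epsilon>\<^sub>0: "star_radius \<epsilon>\<^sub>0 (x i)"
    by (rule star_radius_exists)
  have "?m * payoff E src tgt lam n x i \<le> ?m * payoff E src tgt lam n x j"
  proof (rule le_if_le_add_linear)
    show "0 < \<epsilon>\<^sub>0"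
      using \<epsilon>\<^sub>0 by (simp add: star_radius_def)
    show "?m * payoff E src tgt lam n x i
        \<le> ?m * payoff E src tgt lam n x j + 4 * real (card E) * \<epsilon>"
      if "0 < \<epsilon>" "\<epsilon> < \<epsilon>\<^sub>0" for \<epsilon>
      using balanced_payoff_le_payoff_add[OF assms(4,5) j] star_radius_mono[OF \<epsilon>\<^sub>0] that by simp
  qed
  moreover have "0 < ?m"
    using balanced_point_degree_pos[OF assms(5)] by simp
  ultimately show "payoff E src tgt lam n x i \<le> payoff E src tgt lam n x j"
    by simp
qed

end
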